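(* Let $\mu$ be a probability measure on $[0,1]$ that is absolutely continuous with continuous density, let $q\in(0,1)$ and $y\in\mathbb{R}$. For each $n$, let $X_1,\dots,X_n$ be i.i.d. with law $\mu$ and $\vec X=(X_1,\dots,X_n)$. Then \[ \lim_{n\to\infty}\mathbb{E}[SW(\vec X,y)]=q-W_1(\mu,q\delta_y), \] where $\delta_y$ is the Dirac measure at $y$.
   Context: For $n$ agents at positions $\vec x=(x_1,\dots,x_n)$ and a facility at $y$ with capacity $q$, the facility accommodates the $\lfloor qn\rfloor$ agents closest to $y$ (ties broken arbitrarily); an accommodated agent $i$ receives utility $1-|x_i-y|$ and every other agent receives $0$. The social welfare is normalized: $SW(\vec x,y)=\frac1n\sum_{i=1}^n u_i$. For a probability measure $\alpha$ and a positive measure $\beta$ on $\mathbb{R}$ with $\beta(\mathbb{R})\le 1$, $W_1(\alpha,\beta)=\min\int|x-z|\,d\pi(x,z)$ over positive measures $\pi$ on $\mathbb{R}\times\mathbb{R}$ with second marginal equal to $\beta$ and first marginal dominated by $\alpha$. *)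

theory Defs
  imports "HOL-Probability.Probability"
begin

text \<open>Social welfare: n agents at positions x 0, ..., x (n-1), facility at y with capacity q.
  The floor(q n) agents closest to y are accommodated; the utilities of the accommodated
  agents are determined by the floor(q n) smallest distances (ties do not matter), so we
  sum 1 - d over the floor(q n) smallest distances d, normalised by 1/n.\<close>
definition SW :: "real \<Rightarrow> nat \<Rightarrow> (nat \<Rightarrow> real) \<Rightarrow> real \<Rightarrow> real" where
  "SW q n x y =
     (let ds = sort (map (\<lambda>i. \<bar>x i - y\<bar>) [0..<n]);
          k = nat \<lfloor>q * real n\<rfloor>
      in (1 / real n) * sum_list (map (\<lambda>d. 1 - d) (take k ds)))"

definition W1 :: "real measure \<Rightarrow> real measure \<Rightarrow> ennreal" where
  "W1 \<alpha> \<beta> =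
     (INF \<pi> \<in> {\<pi> :: (real \<times> real) measure.
              sets \<pi> = sets (borel \<Otimes>\<^sub>M borel) \<and>
              (\<forall>A \<in> sets borel. emeasure (distr \<pi> borel fst) A \<le> emeasure \<alpha> A) \<and>
              distr \<pi> borel snd = \<beta>}.
        \<integral>\<^sup>+ p. ennreal \<bar>fst p - snd p\<bar> \<partial>\<pi>)"

end

theory Submission
  imports Defs "HOL-Real_Asymp.Real_Asymp"
begin

(* With d_i = |X_i - y| and k = floor(q n), n SW = k - S_k(d), where S_k is the sum of the k
   smallest d_i.  By LP duality S_k(d) = max_t (k t - sum_i (t - d_i)^+), and the dual function
   is concave with slope k - #{i. d_i <= t}.  Take t0 with mu {|z - y| <= t0} = q (possible since
   mu has no atoms).  If all d_i and t0 lie in [0, C], then S_k differs from its dual value at t0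
   by at most C |k - #{i. d_i <= t0}|, which is O(sqrt n) in expectation since the count is
   binomial(n, q).  The dual value at t0 has expectation k t0 - n E (t0 - |X - y|)^+, so E SW tends
   to q - q t0 + E (t0 - |X - y|)^+, that is, to q minus the cost of moving the mass of the ball
   {|z - y| <= t0} to y.  That plan is optimal: every admissible plan pays at least
   t0 q - E (t0 - |X - y|)^+. *)

section \<open>Sum of the smallest entries of a list\<close>

definition sum_smallest :: "nat \<Rightarrow> real list \<Rightarrow> real" where
  "sum_smallest k ds = sum_list (take k (sort ds))"

(* The Lagrangian dual of minimising sum_i w_i d_i subject to 0 <= w_i <= 1 and sum_i w_i = k. *)
definition sum_smallest_dual :: "nat \<Rightarrow> real list \<Rightarrow> real \<Rightarrow> real" where
  "sum_smallest_dual k ds t = real k * t - (\<Sum>d\<leftarrow>ds. max (t - d) 0)"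

lemma sum_list_map_sort: "(\<Sum>x\<leftarrow>sort xs. f x) = (\<Sum>x\<leftarrow>xs. f x :: 'b::comm_monoid_add)"
  by (metis mset_map mset_sort sum_mset_sum_list)

lemma sum_list_map_sort_split:
  "(\<Sum>d\<leftarrow>ds. f d) = (\<Sum>d\<leftarrow>take k (sort ds). f d) + (\<Sum>d\<leftarrow>drop k (sort ds). f d :: 'b::comm_monoid_add)"
  by (simp flip: sum_list_append map_append add: sum_list_map_sort)

lemma sum_list_map_upt: "(\<Sum>i\<leftarrow>[0..<n]. f i) = (\<Sum>i<n. f i)"
  by (simp add: interv_sum_list_conv_sum_set_nat atLeast0LessThan)

lemma nth_sort_in_set: "0 < k \<Longrightarrow> k \<le> length ds \<Longrightarrow> sort ds ! (k - 1) \<in> set ds"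
  by (metis Suc_pred' Suc_le_lessD length_sort nth_mem set_sort)

lemma sum_smallest_dual_le:
  assumes "k \<le> length ds"
  shows "sum_smallest_dual k ds t \<le> sum_smallest k ds"
proof -
  let ?s = "sort ds"
  have "real k * t - sum_list (take k ?s) = (\<Sum>d\<leftarrow>take k ?s. t - d)"
    using assms by (simp add: sum_list_subtractf sum_list_triv)
  also have "\<dots> \<le> (\<Sum>d\<leftarrow>take k ?s. max (t - d) 0)"
    by (rule sum_list_mono) simp
  also have "\<dots> \<le> (\<Sum>d\<leftarrow>ds. max (t - d) 0)"
  proof -
    have "0 \<le> (\<Sum>d\<leftarrow>drop k ?s. max (t - d) 0)"
      by (rule sum_list_nonneg) auto
    then show ?thesis
      by (simp add: sum_list_map_sort_split[of _ ds k])
  qed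
  finally show ?thesis
    unfolding sum_smallest_dual_def sum_smallest_def by linarith
qed

lemma sum_smallest_dual_kth:
  assumes "0 < k" "k \<le> length ds"
  shows "sum_smallest_dual k ds (sort ds ! (k - 1)) = sum_smallest k ds"
proof -
  let ?s = "sort ds"
  define t where "t = ?s ! (k - 1)"
  have below: "d \<le> t" if "d \<in> set (take k ?s)" for d
    using that assms unfolding t_def
    by (auto simp: in_set_conv_nth intro!: sorted_nth_mono)
  have "t \<in> set (take k ?s)"
    using assms unfolding t_def by (auto simp: in_set_conv_nth intro!: exI[of _ "k - 1"])
  then have above: "t \<le> d" if "d \<in> set (drop k ?s)" for d
    using that sorted_append[of "take k ?s" "drop k ?s"] by simp
  have "(\<Sum>d\<leftarrow>ds. max (t - d) 0) = (\<Sum>d\<leftarrow>take k ?s. t - d) + (\<Sum>d\<leftarrow>drop k ?s. 0)"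
    unfolding sum_list_map_sort_split[of _ ds k]
    using below above by (intro arg_cong2[of _ _ _ _ "(+)"] arg_cong[of _ _ sum_list] map_cong) auto
  then show ?thesis
    using assms unfolding sum_smallest_dual_def sum_smallest_def t_def[symmetric]
    by (simp add: sum_list_subtractf sum_list_triv)
qed

lemma sum_smallest_eq_Max_dual:
  assumes "0 < k" "k \<le> length ds"
  shows "sum_smallest k ds = Max (sum_smallest_dual k ds ` set ds)"
proof (rule Max_eqI[symmetric])
  show "x \<le> sum_smallest k ds" if "x \<in> sum_smallest_dual k ds ` set ds" for x
    using that sum_smallest_dual_le assms by auto
  show "sum_smallest k ds \<in> sum_smallest_dual k ds ` set ds"
    using sum_smallest_dual_kth[OF assms] nth_sort_in_set[OF assms] by (metis image_eqI)
qed simp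

lemma sum_smallest_dual_diff_le:
  "sum_smallest_dual k ds s - sum_smallest_dual k ds t
     \<le> (real k - (\<Sum>d\<leftarrow>ds. if d \<le> t then 1 else 0)) * (s - t)"
proof -
  have "(\<Sum>d\<leftarrow>ds. (if d \<le> t then 1 else 0) * (s - t))
      \<le> (\<Sum>d\<leftarrow>ds. max (s - d) 0 - max (t - d) 0)"
    by (rule sum_list_mono) auto
  then show ?thesis
    unfolding sum_smallest_dual_def sum_list_subtractf sum_list_mult_const
    by (simp add: algebra_simps)
qed

lemma sum_smallest_dual_approx:
  assumes "0 < k" "k \<le> length ds" and ds: "\<forall>d\<in>set ds. d \<in> {0..C}" and t: "t \<in> {0..C}"
  shows "\<bar>sum_smallest k ds - sum_smallest_dual k ds t\<bar>
           \<le> C * \<bar>real k - (\<Sum>d\<leftarrow>ds. if d \<le> t then 1 else 0)\<bar>"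
proof -
  define s where "s = sort ds ! (k - 1)"
  define N where "N = (\<Sum>d\<leftarrow>ds. if d \<le> t then 1 else (0::real))"
  have "\<bar>s - t\<bar> \<le> C"
    using nth_sort_in_set[OF assms(1,2)] ds t unfolding s_def by fastforce
  have "sum_smallest_dual k ds s - sum_smallest_dual k ds t \<le> (real k - N) * (s - t)"
    unfolding N_def by (rule sum_smallest_dual_diff_le)
  also have "\<dots> \<le> \<bar>real k - N\<bar> * \<bar>s - t\<bar>"
    by (metis abs_ge_self abs_mult)
  also have "\<dots> \<le> \<bar>real k - N\<bar> * C"
    using \<open>\<bar>s - t\<bar> \<le> C\<close> by (rule mult_left_mono) simp
  finally show ?thesis
    using sum_smallest_dual_kth[OF assms(1,2)] sum_smallest_dual_le[OF assms(2), of t]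
    unfolding s_def N_def by (simp add: mult.commute)
qed

lemma sum_smallest_bounds:
  assumes "k \<le> length ds" "\<forall>d\<in>set ds. d \<in> {0..C}"
  shows "0 \<le> sum_smallest k ds" "sum_smallest k ds \<le> real k * C"
proof -
  have "d \<in> {0..C}" if "d \<in> set (take k (sort ds))" for d
    using that assms(2) set_take_subset[of k "sort ds"] by auto
  then show "0 \<le> sum_smallest k ds" "sum_smallest k ds \<le> real k * C"
    using sum_list_mono[of "take k (sort ds)" "\<lambda>d. d" "\<lambda>_. C"] assms(1)
    by (auto simp: sum_smallest_def sum_list_triv intro: sum_list_nonneg)
qed

lemma borel_measurable_sum_smallest:
  fixes d :: "nat \<Rightarrow> 'a \<Rightarrow> real"
  assumes "\<And>i. i < n \<Longrightarrow> d i \<in> borel_measurable M" "0 < k" "k \<le> n"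
  shows "(\<lambda>x. sum_smallest k (map (\<lambda>i. d i x) [0..<n])) \<in> borel_measurable M"
proof -
  have "sum_smallest k (map (\<lambda>i. d i x) [0..<n])
      = Max ((\<lambda>i. real k * d i x - (\<Sum>j<n. max (d i x - d j x) 0)) ` {..<n})" for x
    using assms(2,3)
    by (simp add: sum_smallest_eq_Max_dual sum_smallest_dual_def sum_list_map_upt
        image_image atLeast0LessThan o_def)
  moreover have "(\<lambda>x. Max ((\<lambda>i. real k * d i x - (\<Sum>j<n. max (d i x - d j x) 0)) ` {..<n}))
      \<in> borel_measurable M"
    using assms(1) by measurable
  ultimately show ?thesis
    by simp
qed

section \<open>Independent samples\<close>

lemma
  fixes h :: "'a \<Rightarrow> real"
  assumes "prob_space \<mu>" "finite I" "J \<subseteq> I" "integrable \<mu> h"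
  shows integrable_PiM_prod_components: "integrable (PiM I (\<lambda>_. \<mu>)) (\<lambda>x. \<Prod>j\<in>J. h (x j))"
    and integral_PiM_prod_components:
      "(\<integral>x. (\<Prod>j\<in>J. h (x j)) \<partial>PiM I (\<lambda>_. \<mu>)) = (\<integral>z. h z \<partial>\<mu>) ^ card J"
proof -
  interpret prob_space \<mu>
    by (rule assms(1))
  interpret product_sigma_finite "\<lambda>_. \<mu>"
    by (simp add: product_sigma_finite_def prob_space_imp_sigma_finite assms(1))
  define f where "f j = (if j \<in> J then h else (\<lambda>_. 1))" for j
  have f: "integrable \<mu> (f j)" for j
    using assms(4) by (simp add: f_def)
  have prod_f: "(\<Prod>j\<in>I. f j (x j)) = (\<Prod>j\<in>J. h (x j))" for x
    using assms(2,3) by (intro prod.mono_neutral_cong_right) (auto simp: f_def)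
  have "integrable (PiM I (\<lambda>_. \<mu>)) (\<lambda>x. \<Prod>j\<in>I. f j (x j))"
    by (rule product_integrable_prod) (use assms(2) f in auto)
  then show "integrable (PiM I (\<lambda>_. \<mu>)) (\<lambda>x. \<Prod>j\<in>J. h (x j))"
    by (simp add: prod_f)
  have "(\<integral>x. (\<Prod>j\<in>I. f j (x j)) \<partial>PiM I (\<lambda>_. \<mu>)) = (\<Prod>j\<in>I. integral\<^sup>L \<mu> (f j))"
    using assms(2) f by (rule product_integral_prod)
  also have "\<dots> = (\<Prod>j\<in>J. \<integral>z. h z \<partial>\<mu>)"
    using assms(2,3) by (intro prod.mono_neutral_cong_right) (auto simp: f_def prob_space)
  finally show "(\<integral>x. (\<Prod>j\<in>J. h (x j)) \<partial>PiM I (\<lambda>_. \<mu>)) = (\<integral>z. h z \<partial>\<mu>) ^ card J"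
    by (simp add: prod_f)
qed

lemma
  fixes h :: "'a \<Rightarrow> real"
  assumes "prob_space \<mu>" "finite I" "i \<in> I" "integrable \<mu> h"
  shows integrable_PiM_component: "integrable (PiM I (\<lambda>_. \<mu>)) (\<lambda>x. h (x i))"
    and integral_PiM_component: "(\<integral>x. h (x i) \<partial>PiM I (\<lambda>_. \<mu>)) = (\<integral>z. h z \<partial>\<mu>)"
  using integrable_PiM_prod_components[of \<mu> I "{i}" h] integral_PiM_prod_components[of \<mu> I "{i}" h]
    assms by simp_all

lemma
  fixes h :: "'a \<Rightarrow> real"
  assumes "prob_space \<mu>" "finite I" "integrable \<mu> h"
  shows integrable_sum_components: "integrable (PiM I (\<lambda>_. \<mu>)) (\<lambda>x. \<Sum>i\<in>I. h (x i))"
    and integral_sum_components: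
      "(\<integral>x. (\<Sum>i\<in>I. h (x i)) \<partial>PiM I (\<lambda>_. \<mu>)) = card I * (\<integral>z. h z \<partial>\<mu>)"
  using integrable_PiM_component[OF assms(1,2) _ assms(3)] integral_PiM_component[OF assms(1,2) _ assms(3)]
  by (auto simp: Bochner_Integration.integral_sum)

lemma
  fixes h :: "'a \<Rightarrow> real"
  assumes "prob_space \<mu>" "finite I" "integrable \<mu> h" "integrable \<mu> (\<lambda>z. (h z)\<^sup>2)"
    and centered: "(\<integral>z. h z \<partial>\<mu>) = 0"
  shows integrable_square_sum_components:
      "integrable (PiM I (\<lambda>_. \<mu>)) (\<lambda>x. (\<Sum>i\<in>I. h (x i))\<^sup>2)"
    and integral_square_sum_components:
      "(\<integral>x. (\<Sum>i\<in>I. h (x i))\<^sup>2 \<partial>PiM I (\<lambda>_. \<mu>)) = card I * (\<integral>z. (h z)\<^sup>2 \<partial>\<mu>)"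
proof -
  let ?P = "PiM I (\<lambda>_. \<mu>)"
  have square: "(\<Sum>i\<in>I. h (x i))\<^sup>2 = (\<Sum>i\<in>I. \<Sum>j\<in>I. h (x i) * h (x j))" for x
    by (simp add: power2_eq_square sum_product)
  have pair: "integrable ?P (\<lambda>x. h (x i) * h (x j)) \<and>
      (\<integral>x. h (x i) * h (x j) \<partial>?P) = (if i = j then \<integral>z. (h z)\<^sup>2 \<partial>\<mu> else 0)"
    if "i \<in> I" "j \<in> I" for i j
  proof (cases "i = j")
    case True
    then show ?thesis
      using integrable_PiM_component[of \<mu> I i "\<lambda>z. (h z)\<^sup>2"]
        integral_PiM_component[of \<mu> I i "\<lambda>z. (h z)\<^sup>2"] assms that
      by (simp add: power2_eq_square)
  next
    case False
    then show ?thesis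
      using integrable_PiM_prod_components[of \<mu> I "{i, j}" h]
        integral_PiM_prod_components[of \<mu> I "{i, j}" h] assms that
      by simp
  qed
  show "integrable ?P (\<lambda>x. (\<Sum>i\<in>I. h (x i))\<^sup>2)"
    unfolding square using pair by auto
  have "(\<integral>x. (\<Sum>i\<in>I. h (x i))\<^sup>2 \<partial>?P) = (\<Sum>i\<in>I. \<Sum>j\<in>I. if i = j then \<integral>z. (h z)\<^sup>2 \<partial>\<mu> else 0)"
    unfolding square using pair by (simp add: integral_sum)
  also have "\<dots> = card I * (\<integral>z. (h z)\<^sup>2 \<partial>\<mu>)"
    using assms(2) by simp
  finally show "(\<integral>x. (\<Sum>i\<in>I. h (x i))\<^sup>2 \<partial>?P) = card I * (\<integral>z. (h z)\<^sup>2 \<partial>\<mu>)" .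
qed

lemma integral_abs_sum_components_le:
  fixes h :: "'a \<Rightarrow> real"
  assumes "prob_space \<mu>" "finite I" "integrable \<mu> h" "integrable \<mu> (\<lambda>z. (h z)\<^sup>2)"
    and "(\<integral>z. h z \<partial>\<mu>) = 0"
  shows "(\<integral>x. \<bar>\<Sum>i\<in>I. h (x i)\<bar> \<partial>PiM I (\<lambda>_. \<mu>)) \<le> sqrt (card I * (\<integral>z. (h z)\<^sup>2 \<partial>\<mu>))"
proof -
  interpret P: prob_space "PiM I (\<lambda>_. \<mu>)"
    using assms(1) by (rule prob_space_PiM)
  let ?S = "\<lambda>x. \<bar>\<Sum>i\<in>I. h (x i)\<bar>"
  have "integrable (PiM I (\<lambda>_. \<mu>)) ?S"
    using integrable_sum_components[OF assms(1-3)] by simp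
  moreover have "integrable (PiM I (\<lambda>_. \<mu>)) (\<lambda>x. (?S x)\<^sup>2)"
    using integrable_square_sum_components[OF assms] by simp
  ultimately have "(\<integral>x. ?S x \<partial>PiM I (\<lambda>_. \<mu>))\<^sup>2 \<le> (\<integral>x. (?S x)\<^sup>2 \<partial>PiM I (\<lambda>_. \<mu>))"
    using P.variance_positive[of ?S] P.variance_eq[of ?S] by simp
  also have "\<dots> = card I * (\<integral>z. (h z)\<^sup>2 \<partial>\<mu>)"
    using integral_square_sum_components[OF assms] by simp
  finally show ?thesis
    by (rule real_le_rsqrt)
qed

lemma integral_abs_count_deviation_le:
  assumes "prob_space \<mu>" "finite I" "A \<in> sets \<mu>"
  shows "(\<integral>x. \<bar>(\<Sum>i\<in>I. indicator A (x i)) - card I * measure \<mu> A\<bar> \<partial>PiM I (\<lambda>_. \<mu>))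
           \<le> sqrt (card I)"
proof -
  interpret prob_space \<mu>
    by (rule assms(1))
  define h where "h = (\<lambda>z. indicator A z - measure \<mu> A)"
  have h_bound: "\<bar>h z\<bar> \<le> 1" for z
    by (simp add: h_def indicator_def prob_le_1)
  have "h \<in> borel_measurable \<mu>"
    unfolding h_def by (intro borel_measurable_diff borel_measurable_indicator assms(3)) simp
  then have h: "integrable \<mu> h" "integrable \<mu> (\<lambda>z. (h z)\<^sup>2)"
    using h_bound by (auto intro!: integrable_const_bound[where B=1] simp: abs_square_le_1)
  have centered: "(\<integral>z. h z \<partial>\<mu>) = 0"
    using assms(3) by (simp add: h_def emeasure_eq_measure prob_space)
  have "(\<integral>z. (h z)\<^sup>2 \<partial>\<mu>) \<le> (\<integral>z. 1 \<partial>\<mu>)"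
    using h h_bound by (intro integral_mono) (auto simp: abs_square_le_1)
  then have "sqrt (card I * (\<integral>z. (h z)\<^sup>2 \<partial>\<mu>)) \<le> sqrt (card I)"
    by (simp add: prob_space mult_left_le)
  then have "(\<integral>x. \<bar>\<Sum>i\<in>I. h (x i)\<bar> \<partial>PiM I (\<lambda>_. \<mu>)) \<le> sqrt (card I)"
    using integral_abs_sum_components_le[OF assms(1,2) h centered] by linarith
  then show ?thesis
    by (simp add: h_def sum_subtractf)
qed

lemma integral_abs_const_minus_count_le:
  assumes "prob_space \<mu>" "finite I" "A \<in> sets \<mu>"
  shows "(\<integral>x. \<bar>c - (\<Sum>i\<in>I. indicator A (x i))\<bar> \<partial>PiM I (\<lambda>_. \<mu>))
           \<le> \<bar>c - card I * measure \<mu> A\<bar> + sqrt (card I)"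
proof -
  let ?P = "PiM I (\<lambda>_. \<mu>)"
  let ?N = "\<lambda>x. \<Sum>i\<in>I. indicator A (x i) :: real"
  interpret prob_space \<mu>
    by (rule assms(1))
  interpret P: prob_space ?P
    using assms(1) by (rule prob_space_PiM)
  have "integrable \<mu> (indicator A :: _ \<Rightarrow> real)"
    using assms(3) by (simp add: emeasure_eq_measure)
  then have N: "integrable ?P ?N"
    using integrable_sum_components[OF assms(1,2)] by simp
  have "(\<integral>x. \<bar>c - ?N x\<bar> \<partial>?P) \<le> (\<integral>x. \<bar>c - card I * measure \<mu> A\<bar> + \<bar>?N x - card I * measure \<mu> A\<bar> \<partial>?P)"
    using N by (intro integral_mono) auto
  also have "\<dots> = \<bar>c - card I * measure \<mu> A\<bar> + (\<integral>x. \<bar>?N x - card I * measure \<mu> A\<bar> \<partial>?P)"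
    using N by (simp add: P.prob_space)
  finally show ?thesis
    using integral_abs_count_deviation_le[OF assms] by linarith
qed

lemma AE_sum_smallest_sample_approx:
  fixes \<mu> :: "'a measure" and D :: "'a \<Rightarrow> real"
  assumes \<mu>: "prob_space \<mu>" and D_bound: "AE z in \<mu>. D z \<in> {0..C}" and t: "t \<in> {0..C}"
    and k: "0 < k" "k \<le> n"
  shows "AE x in PiM {..<n} (\<lambda>_. \<mu>).
           \<bar>sum_smallest k (map (\<lambda>i. D (x i)) [0..<n]) - (real k * t - (\<Sum>i<n. max (t - D (x i)) 0))\<bar>
             \<le> C * \<bar>real k - (\<Sum>i<n. indicator {z \<in> space \<mu>. D z \<le> t} (x i))\<bar>"
proof -
  have "AE x in PiM {..<n} (\<lambda>_. \<mu>). \<forall>i\<in>{..<n}. D (x i) \<in> {0..C}"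
    using \<mu> D_bound by (intro eventually_ball_finite ballI AE_PiM_component) auto
  moreover have "AE x in PiM {..<n} (\<lambda>_. \<mu>). x \<in> space (PiM {..<n} (\<lambda>_. \<mu>))"
    by (rule AE_space)
  ultimately show ?thesis
  proof eventually_elim
    case (elim x)
    then have "indicator {z \<in> space \<mu>. D z \<le> t} (x i) = (if D (x i) \<le> t then 1 else 0 :: real)"
      if "i < n" for i
      using that by (auto simp: space_PiM indicator_def)
    then show ?case
      using sum_smallest_dual_approx[of k "map (\<lambda>i. D (x i)) [0..<n]" C t] elim(1) t k
      by (simp add: sum_smallest_dual_def sum_list_map_upt o_def)
  qed
qed

lemma integrable_sum_smallest_sample:
  fixes \<mu> :: "'a measure" and D :: "'a \<Rightarrow> real"
  assumes \<mu>: "prob_space \<mu>" and D: "D \<in> borel_measurable \<mu>"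
    and D_bound: "AE z in \<mu>. D z \<in> {0..C}" and k: "0 < k" "k \<le> n"
  shows "integrable (PiM {..<n} (\<lambda>_. \<mu>)) (\<lambda>x. sum_smallest k (map (\<lambda>i. D (x i)) [0..<n]))"
proof -
  interpret P: prob_space "PiM {..<n} (\<lambda>_. \<mu>)"
    using \<mu> by (rule prob_space_PiM)
  have component: "(\<lambda>x. x i) \<in> measurable (PiM {..<n} (\<lambda>_. \<mu>)) \<mu>" if "i < n" for i
    using that by (simp add: measurable_component_singleton)
  have "AE x in PiM {..<n} (\<lambda>_. \<mu>). \<forall>i\<in>{..<n}. D (x i) \<in> {0..C}"
    using \<mu> D_bound by (intro eventually_ball_finite ballI AE_PiM_component) auto
  then have "AE x in PiM {..<n} (\<lambda>_. \<mu>). norm (sum_smallest k (map (\<lambda>i. D (x i)) [0..<n])) \<le> real k * C"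
    by eventually_elim (use sum_smallest_bounds[of k "map _ [0..<n]" C] k in auto)
  moreover have "(\<lambda>x. sum_smallest k (map (\<lambda>i. D (x i)) [0..<n])) \<in> borel_measurable (PiM {..<n} (\<lambda>_. \<mu>))"
    using component k by (intro borel_measurable_sum_smallest) (auto intro: measurable_compose[OF _ D])
  ultimately show ?thesis
    by (rule P.integrable_const_bound)
qed

lemma expectation_sum_smallest_sample:
  fixes \<mu> :: "'a measure" and D :: "'a \<Rightarrow> real"
  assumes \<mu>: "prob_space \<mu>" and D: "D \<in> borel_measurable \<mu>"
    and D_bound: "AE z in \<mu>. D z \<in> {0..C}" and t: "t \<in> {0..C}" and k: "0 < k" "k \<le> n"
  defines "P \<equiv> PiM {..<n} (\<lambda>_. \<mu>)"
    and "S \<equiv> \<lambda>x. sum_smallest k (map (\<lambda>i. D (x i)) [0..<n])"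
  shows "\<bar>(\<integral>x. S x \<partial>P) - (real k * t - real n * (\<integral>z. max (t - D z) 0 \<partial>\<mu>))\<bar>
           \<le> C * (\<bar>real k - real n * measure \<mu> {z \<in> space \<mu>. D z \<le> t}\<bar> + sqrt (real n))"
proof -
  interpret \<mu>: prob_space \<mu>
    by (rule \<mu>)
  interpret P: prob_space P
    unfolding P_def using \<mu> by (rule prob_space_PiM)
  define A where "A = {z \<in> space \<mu>. D z \<le> t}"
  define G where "G x = real k * t - (\<Sum>i<n. max (t - D (x i)) 0)" for x
  define N where "N x = (\<Sum>i<n. indicator A (x i) :: real)" for x
  have S: "integrable P S"
    unfolding P_def S_def using integrable_sum_smallest_sample[OF \<mu> D D_bound k] .
  have "AE z in \<mu>. norm (max (t - D z) 0) \<le> t"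
    using D_bound by eventually_elim (use t in auto)
  then have "integrable \<mu> (\<lambda>z. max (t - D z) 0)"
    using D by (intro \<mu>.integrable_const_bound) auto
  note hinge = integrable_sum_components[OF \<mu> _ this, of "{..<n}", folded P_def]
    integral_sum_components[OF \<mu> _ this, of "{..<n}", folded P_def]
  have G: "integrable P G"
    unfolding G_def using hinge(1) by simp
  have A: "A \<in> sets \<mu>"
    unfolding A_def using D by measurable
  then have "integrable \<mu> (indicator A :: _ \<Rightarrow> real)"
    by (simp add: \<mu>.emeasure_eq_measure)
  then have N: "integrable P N"
    unfolding P_def N_def using integrable_sum_components[OF \<mu>, of "{..<n}"] by simp
  have S_approx: "AE x in P. \<bar>S x - G x\<bar> \<le> C * \<bar>real k - N x\<bar>"
    unfolding P_def S_def G_def N_def A_def using AE_sum_smallest_sample_approx[OF \<mu> D_bound t k] .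
  have "(\<integral>x. G x \<partial>P) = real k * t - real n * (\<integral>z. max (t - D z) 0 \<partial>\<mu>)"
    unfolding G_def using hinge by (simp add: P.prob_space)
  then have "\<bar>(\<integral>x. S x \<partial>P) - (real k * t - real n * (\<integral>z. max (t - D z) 0 \<partial>\<mu>))\<bar>
      = \<bar>\<integral>x. S x - G x \<partial>P\<bar>"
    using S G by simp
  also have "\<dots> \<le> (\<integral>x. \<bar>S x - G x\<bar> \<partial>P)"
    using integral_norm_bound[of P "\<lambda>x. S x - G x"] by simp
  also have "\<dots> \<le> (\<integral>x. C * \<bar>real k - N x\<bar> \<partial>P)"
    using S G N S_approx by (intro integral_mono_AE) auto
  also have "\<dots> \<le> C * (\<bar>real k - real n * measure \<mu> A\<bar> + sqrt (real n))"
    using integral_abs_const_minus_count_le[OF \<mu> _ A, of "{..<n}" "real k"] t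
    unfolding P_def N_def by (simp add: mult_left_mono)
  finally show ?thesis
    unfolding A_def .
qed

section \<open>Expected social welfare\<close>

lemma SW_eq_sum_smallest:
  assumes "k = nat \<lfloor>q * real n\<rfloor>" "k \<le> n"
  shows "SW q n x y = (real k - sum_smallest k (map (\<lambda>i. \<bar>x i - y\<bar>) [0..<n])) / real n"
  using assms by (simp add: SW_def sum_smallest_def Let_def sum_list_subtractf sum_list_triv min_def)

lemma integral_dist_indicator_ball:
  fixes \<mu> :: "real measure"
  assumes "finite_measure \<mu>" "sets \<mu> = sets borel"
  shows "(\<integral>z. \<bar>z - y\<bar> * indicator {z. \<bar>z - y\<bar> \<le> t} z \<partial>\<mu>)
           = t * measure \<mu> {z. \<bar>z - y\<bar> \<le> t} - (\<integral>z. max (t - \<bar>z - y\<bar>) 0 \<partial>\<mu>)"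
proof -
  interpret finite_measure \<mu>
    by (rule assms(1))
  let ?B = "{z. \<bar>z - y\<bar> \<le> t}"
  have B: "?B \<in> sets \<mu>"
    unfolding assms(2) by measurable
  have "(\<lambda>z. max (t - \<bar>z - y\<bar>) 0) \<in> borel_measurable \<mu>"
    by (simp add: measurable_cong_sets[OF assms(2) refl])
  then have "integrable \<mu> (\<lambda>z. max (t - \<bar>z - y\<bar>) 0)"
    by (intro integrable_const_bound[where B="\<bar>t\<bar>"]) auto
  moreover have "integrable \<mu> (\<lambda>z. t * indicator ?B z)"
    using B by (simp add: emeasure_eq_measure)
  moreover have "\<bar>z - y\<bar> * indicator ?B z = t * indicator ?B z - max (t - \<bar>z - y\<bar>) 0" for z
    by (auto simp: indicator_def)
  ultimately show ?thesis
    using B by simp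
qed

lemma expected_SW_error_le:
  fixes \<mu> :: "real measure"
  assumes \<mu>: "prob_space \<mu>" "sets \<mu> = sets borel" and bound: "AE z in \<mu>. \<bar>z - y\<bar> \<le> C"
    and t: "0 \<le> t" "t \<le> C" and mass: "measure \<mu> {z. \<bar>z - y\<bar> \<le> t} = q"
    and k: "k = nat \<lfloor>q * real n\<rfloor>" "0 < k" "k \<le> n"
  shows "\<bar>(\<integral>x. SW q n x y \<partial>PiM {..<n} (\<lambda>_. \<mu>))
            - (real k / n * (1 - t) + (\<integral>z. max (t - \<bar>z - y\<bar>) 0 \<partial>\<mu>))\<bar>
           \<le> C * (1 + sqrt (real n)) / n"
proof -
  let ?P = "PiM {..<n} (\<lambda>_. \<mu>)"
  let ?S = "\<lambda>x. sum_smallest k (map (\<lambda>i. \<bar>x i - y\<bar>) [0..<n])"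
  let ?J = "\<integral>z. max (t - \<bar>z - y\<bar>) 0 \<partial>\<mu>"
  interpret P: prob_space ?P
    using \<mu>(1) by (rule prob_space_PiM)
  have "(\<lambda>z. \<bar>z - y\<bar>) \<in> borel_measurable \<mu>"
    by (simp add: measurable_cong_sets[OF \<mu>(2) refl])
  moreover have "AE z in \<mu>. \<bar>z - y\<bar> \<in> {0..C}"
    using bound by eventually_elim simp
  moreover have "{z \<in> space \<mu>. \<bar>z - y\<bar> \<le> t} = {z. \<bar>z - y\<bar> \<le> t}"
    using sets_eq_imp_space_eq[OF \<mu>(2)] by simp
  ultimately have S: "integrable ?P ?S"
    and S_approx: "\<bar>(\<integral>x. ?S x \<partial>?P) - (real k * t - n * ?J)\<bar> \<le> C * (\<bar>real k - n * q\<bar> + sqrt n)"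
    using integrable_sum_smallest_sample[OF \<mu>(1), of "\<lambda>z. \<bar>z - y\<bar>" C k n]
      expectation_sum_smallest_sample[OF \<mu>(1), of "\<lambda>z. \<bar>z - y\<bar>" C t k n] t k(2,3) mass
    by auto
  have "\<bar>real k - n * q\<bar> \<le> 1"
    using k(1) floor_correct[of "q * real n"] k(2) by (simp add: mult.commute) linarith
  then have "C * (\<bar>real k - n * q\<bar> + sqrt n) \<le> C * (1 + sqrt n)"
    using t by (intro mult_left_mono) auto
  then have "\<bar>(\<integral>x. ?S x \<partial>?P) - (real k * t - n * ?J)\<bar> \<le> C * (1 + sqrt n)"
    using S_approx by linarith
  moreover have "(\<integral>x. SW q n x y \<partial>?P) = (real k - (\<integral>x. ?S x \<partial>?P)) / n"
    using SW_eq_sum_smallest[OF k(1,3)] S by (simp add: P.prob_space)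
  moreover have "0 < n"
    using k(2,3) by linarith
  ultimately show ?thesis
    by (simp add: field_simps abs_minus_commute abs_divide divide_right_mono)
qed

lemma expected_SW_tendsto:
  fixes \<mu> :: "real measure"
  assumes \<mu>: "prob_space \<mu>" "sets \<mu> = sets borel" and bound: "AE z in \<mu>. \<bar>z - y\<bar> \<le> C"
    and t: "0 \<le> t" "t \<le> C" and q: "0 < q" "q < 1" and mass: "measure \<mu> {z. \<bar>z - y\<bar> \<le> t} = q"
  shows "(\<lambda>n. \<integral>x. SW q n x y \<partial>PiM {..<n} (\<lambda>_. \<mu>))
           \<longlonglongrightarrow> q - (\<integral>z. \<bar>z - y\<bar> * indicator {z. \<bar>z - y\<bar> \<le> t} z \<partial>\<mu>)"
proof -
  define k where "k n = nat \<lfloor>q * real n\<rfloor>" for n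
  define J where "J = (\<integral>z. max (t - \<bar>z - y\<bar>) 0 \<partial>\<mu>)"
  define err where
    "err n = (\<integral>x. SW q n x y \<partial>PiM {..<n} (\<lambda>_. \<mu>)) - (real (k n) / n * (1 - t) + J)" for n
  have "eventually (\<lambda>n. 1 \<le> q * real n) sequentially"
    using q by real_asymp
  then have "eventually (\<lambda>n. norm (err n) \<le> C * (1 + sqrt (real n)) / n) sequentially"
  proof eventually_elim
    case (elim n)
    then have "0 < k n" "k n \<le> n"
      using q floor_correct[of "q * real n"] mult_left_le_one_le[of "real n" q]
      unfolding k_def by linarith+
    then show ?case
      using expected_SW_error_le[OF \<mu> bound t mass k_def] unfolding err_def J_def by simp
  qed
  moreover have "(\<lambda>n. C * (1 + sqrt (real n)) / n) \<longlonglongrightarrow> 0"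
    by real_asymp
  ultimately have "err \<longlonglongrightarrow> 0"
    by (rule Lim_null_comparison)
  moreover have "(\<lambda>n. real (k n) / n) \<longlonglongrightarrow> q"
    unfolding k_def using q by real_asymp
  ultimately have "(\<lambda>n. err n + (real (k n) / n * (1 - t) + J)) \<longlonglongrightarrow> 0 + (q * (1 - t) + J)"
    by (intro tendsto_intros)
  moreover have "q * (1 - t) + J = q - (\<integral>z. \<bar>z - y\<bar> * indicator {z. \<bar>z - y\<bar> \<le> t} z \<partial>\<mu>)"
    unfolding J_def using integral_dist_indicator_ball[OF prob_space.finite_measure[OF \<mu>(1)] \<mu>(2)] mass
    by (simp add: algebra_simps)
  ultimately show ?thesis
    by (simp add: err_def)
qed

section \<open>Partial transport to a point mass\<close>

lemma AE_snd_eq_point: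
  fixes \<pi> :: "('a \<times> real) measure"
  assumes snd: "snd \<in> measurable \<pi> borel"
    and snd_eq: "distr \<pi> borel snd = scale_measure r (return borel y)"
  shows "AE p in \<pi>. snd p = y"
proof -
  have "emeasure \<pi> (snd -` (UNIV - {y}) \<inter> space \<pi>) = emeasure (distr \<pi> borel snd) (UNIV - {y})"
    using snd by (simp add: emeasure_distr)
  then show ?thesis
    using snd unfolding snd_eq by (intro AE_I'[where N="snd -` (UNIV - {y}) \<inter> space \<pi>"]) auto
qed

lemma transport_cost_to_point_ge:
  fixes \<mu> :: "real measure" and \<pi> :: "(real \<times> real) measure"
  assumes \<mu>: "sets \<mu> = sets borel" and \<pi>: "sets \<pi> = sets (borel \<Otimes>\<^sub>M borel)"
    and fst_le: "\<forall>A \<in> sets borel. emeasure (distr \<pi> borel fst) A \<le> emeasure \<mu> A"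
    and snd_eq: "distr \<pi> borel snd = scale_measure (ennreal q) (return borel y)"
    and "0 \<le> t" "0 \<le> q"
  shows "ennreal (t * q)
           \<le> (\<integral>\<^sup>+p. ennreal \<bar>fst p - snd p\<bar> \<partial>\<pi>) + (\<integral>\<^sup>+z. ennreal (max (t - \<bar>z - y\<bar>) 0) \<partial>\<mu>)"
proof -
  define \<pi>\<^sub>1 where "\<pi>\<^sub>1 = distr \<pi> borel fst"
  have fst: "fst \<in> measurable \<pi> borel" and snd: "snd \<in> measurable \<pi> borel"
    by (simp_all add: measurable_cong_sets[OF \<pi> refl])
  have sets_\<pi>\<^sub>1: "sets \<pi>\<^sub>1 = sets \<mu>"
    unfolding \<pi>\<^sub>1_def using \<mu> by simp
  have "\<pi>\<^sub>1 \<le> \<mu>"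
    using fst_le sets_\<pi>\<^sub>1 sets_eq_imp_space_eq[OF sets_\<pi>\<^sub>1] \<mu>
    by (auto simp: le_measure_iff le_fun_def \<pi>\<^sub>1_def emeasure_notin_sets)
  have "AE p in \<pi>. snd p = y"
    using snd snd_eq by (rule AE_snd_eq_point)
  then have "(\<integral>\<^sup>+p. ennreal \<bar>fst p - snd p\<bar> \<partial>\<pi>) = (\<integral>\<^sup>+p. ennreal \<bar>fst p - y\<bar> \<partial>\<pi>)"
    by (intro nn_integral_cong_AE) auto
  also have "\<dots> = (\<integral>\<^sup>+z. ennreal \<bar>z - y\<bar> \<partial>\<pi>\<^sub>1)"
    unfolding \<pi>\<^sub>1_def using fst by (simp add: nn_integral_distr)
  finally have cost: "(\<integral>\<^sup>+p. ennreal \<bar>fst p - snd p\<bar> \<partial>\<pi>) = (\<integral>\<^sup>+z. ennreal \<bar>z - y\<bar> \<partial>\<pi>\<^sub>1)" .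
  have "emeasure \<pi>\<^sub>1 (space \<pi>\<^sub>1) = emeasure (distr \<pi> borel snd) (space (distr \<pi> borel snd))"
    unfolding \<pi>\<^sub>1_def using fst snd by (simp add: emeasure_distr)
  then have "ennreal (t * q) = (\<integral>\<^sup>+z. ennreal t \<partial>\<pi>\<^sub>1)"
    using assms(5,6) unfolding snd_eq by (simp add: space_scale_measure ennreal_mult)
  also have "\<dots> \<le> (\<integral>\<^sup>+z. ennreal \<bar>z - y\<bar> + ennreal (max (t - \<bar>z - y\<bar>) 0) \<partial>\<pi>\<^sub>1)"
  proof (intro nn_integral_mono)
    fix z
    have "ennreal t \<le> ennreal (\<bar>z - y\<bar> + max (t - \<bar>z - y\<bar>) 0)"
      by (intro ennreal_leI) simp
    also have "\<dots> = ennreal \<bar>z - y\<bar> + ennreal (max (t - \<bar>z - y\<bar>) 0)"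
      by (intro ennreal_plus) auto
    finally show "ennreal t \<le> ennreal \<bar>z - y\<bar> + ennreal (max (t - \<bar>z - y\<bar>) 0)" .
  qed
  also have "\<dots> = (\<integral>\<^sup>+z. ennreal \<bar>z - y\<bar> \<partial>\<pi>\<^sub>1) + (\<integral>\<^sup>+z. ennreal (max (t - \<bar>z - y\<bar>) 0) \<partial>\<pi>\<^sub>1)"
    unfolding \<pi>\<^sub>1_def by (intro nn_integral_add) auto
  also have "\<dots> \<le> (\<integral>\<^sup>+z. ennreal \<bar>z - y\<bar> \<partial>\<pi>\<^sub>1) + (\<integral>\<^sup>+z. ennreal (max (t - \<bar>z - y\<bar>) 0) \<partial>\<mu>)"
    using sets_\<pi>\<^sub>1 \<open>\<pi>\<^sub>1 \<le> \<mu>\<close> by (intro add_left_mono nn_integral_mono_measure)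
  finally show ?thesis
    unfolding cost .
qed

lemma W1_point_mass_le:
  fixes \<mu> :: "real measure"
  assumes \<mu>: "sets \<mu> = sets borel" and A: "A \<in> sets borel" and mass: "emeasure \<mu> A = ennreal q"
  shows "W1 \<mu> (scale_measure (ennreal q) (return borel y))
           \<le> (\<integral>\<^sup>+z. ennreal (\<bar>z - y\<bar> * indicator A z) \<partial>\<mu>)"
proof -
  define \<mu>\<^sub>A where "\<mu>\<^sub>A = density \<mu> (indicator A)"
  define \<pi> where "\<pi> = distr \<mu>\<^sub>A (borel \<Otimes>\<^sub>M borel) (\<lambda>x. (x, y))"
  have sets_\<mu>\<^sub>A: "sets \<mu>\<^sub>A = sets borel"
    unfolding \<mu>\<^sub>A_def using \<mu> by simp
  have pair: "(\<lambda>x. (x, y)) \<in> measurable \<mu>\<^sub>A (borel \<Otimes>\<^sub>M borel)"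
    by (simp add: measurable_cong_sets[OF sets_\<mu>\<^sub>A refl])
  have \<mu>\<^sub>A: "emeasure \<mu>\<^sub>A B = emeasure \<mu> (A \<inter> B)" if "B \<in> sets borel" for B
    unfolding \<mu>\<^sub>A_def using A that \<mu> by (intro emeasure_restricted) auto
  have fst: "distr \<pi> borel fst = \<mu>\<^sub>A"
    unfolding \<pi>_def using pair sets_\<mu>\<^sub>A by (simp add: distr_distr comp_def distr_id2)
  have snd: "distr \<pi> borel snd = scale_measure (ennreal q) (return borel y)"
  proof (rule measure_eqI)
    fix B assume "B \<in> sets (distr \<pi> borel snd)"
    then have "B \<in> sets borel"
      by simp
    moreover have "emeasure \<mu>\<^sub>A (space \<mu>\<^sub>A) = ennreal q"
      using \<mu>\<^sub>A[of UNIV] mass sets_eq_imp_space_eq[OF sets_\<mu>\<^sub>A] by simp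
    ultimately show "emeasure (distr \<pi> borel snd) B = emeasure (scale_measure (ennreal q) (return borel y)) B"
      unfolding \<pi>_def using pair by (simp add: distr_distr comp_def emeasure_distr vimage_def indicator_def)
  qed simp
  have "(\<integral>\<^sup>+p. ennreal \<bar>fst p - snd p\<bar> \<partial>\<pi>) = (\<integral>\<^sup>+x. ennreal \<bar>x - y\<bar> \<partial>\<mu>\<^sub>A)"
    unfolding \<pi>_def by (subst nn_integral_distr[OF pair]) simp_all
  also have "\<dots> = (\<integral>\<^sup>+z. ennreal (\<bar>z - y\<bar> * indicator A z) \<partial>\<mu>)"
    unfolding \<mu>\<^sub>A_def using A \<mu>
    by (subst nn_integral_density) (auto simp: measurable_cong_sets[OF \<mu> refl] indicator_def intro!: nn_integral_cong)
  finally have cost: "(\<integral>\<^sup>+p. ennreal \<bar>fst p - snd p\<bar> \<partial>\<pi>) = (\<integral>\<^sup>+z. ennreal (\<bar>z - y\<bar> * indicator A z) \<partial>\<mu>)" .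
  have "\<forall>B \<in> sets borel. emeasure (distr \<pi> borel fst) B \<le> emeasure \<mu> B"
    using \<mu>\<^sub>A \<mu> by (simp add: fst emeasure_mono)
  then have "\<pi> \<in> {\<pi> :: (real \<times> real) measure.
              sets \<pi> = sets (borel \<Otimes>\<^sub>M borel) \<and>
              (\<forall>A \<in> sets borel. emeasure (distr \<pi> borel fst) A \<le> emeasure \<mu> A) \<and>
              distr \<pi> borel snd = scale_measure (ennreal q) (return borel y)}"
    using snd by (simp add: \<pi>_def)
  then show ?thesis
    unfolding W1_def cost[symmetric] by (rule INF_lower)
qed

lemma W1_point_mass_ge:
  fixes \<mu> :: "real measure"
  assumes \<mu>: "prob_space \<mu>" "sets \<mu> = sets borel" and t: "0 \<le> t"
    and mass: "measure \<mu> {z. \<bar>z - y\<bar> \<le> t} = q"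
  shows "ennreal (\<integral>z. \<bar>z - y\<bar> * indicator {z. \<bar>z - y\<bar> \<le> t} z \<partial>\<mu>)
           \<le> W1 \<mu> (scale_measure (ennreal q) (return borel y))"
  unfolding W1_def
proof (rule INF_greatest, clarify)
  interpret prob_space \<mu>
    by (rule \<mu>(1))
  fix \<pi> :: "(real \<times> real) measure"
  assume "sets \<pi> = sets (borel \<Otimes>\<^sub>M borel)"
    "\<forall>A\<in>sets borel. emeasure (distr \<pi> borel fst) A \<le> emeasure \<mu> A"
    "distr \<pi> borel snd = scale_measure (ennreal q) (return borel y)"
  note cost_ge = transport_cost_to_point_ge[OF \<mu>(2) this t measure_nonneg[of \<mu> "{z. \<bar>z - y\<bar> \<le> t}", unfolded mass]]
  define I where "I = (\<integral>z. \<bar>z - y\<bar> * indicator {z. \<bar>z - y\<bar> \<le> t} z \<partial>\<mu>)"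
  define J where "J = (\<integral>z. max (t - \<bar>z - y\<bar>) 0 \<partial>\<mu>)"
  have "(\<lambda>z. max (t - \<bar>z - y\<bar>) 0) \<in> borel_measurable \<mu>"
    by (simp add: measurable_cong_sets[OF \<mu>(2) refl])
  then have "integrable \<mu> (\<lambda>z. max (t - \<bar>z - y\<bar>) 0)"
    by (intro integrable_const_bound[where B=t]) (auto simp: t)
  then have J: "(\<integral>\<^sup>+z. ennreal (max (t - \<bar>z - y\<bar>) 0) \<partial>\<mu>) = ennreal J"
    unfolding J_def by (intro nn_integral_eq_integral) auto
  have "0 \<le> I" "0 \<le> J"
    unfolding I_def J_def by (auto intro!: integral_nonneg simp: indicator_def)
  moreover have "t * q = I + J"
    using integral_dist_indicator_ball[OF finite_measure_axioms \<mu>(2), of y t] mass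
    unfolding I_def J_def by simp
  ultimately have "ennreal J + ennreal I \<le> ennreal J + (\<integral>\<^sup>+p. ennreal \<bar>fst p - snd p\<bar> \<partial>\<pi>)"
    using cost_ge unfolding J by (simp add: ennreal_plus[symmetric] add.commute del: ennreal_plus)
  then show "ennreal I \<le> (\<integral>\<^sup>+p. ennreal \<bar>fst p - snd p\<bar> \<partial>\<pi>)"
    by (simp add: ennreal_add_left_cancel_le)
qed

lemma W1_point_mass:
  fixes \<mu> :: "real measure"
  assumes \<mu>: "prob_space \<mu>" "sets \<mu> = sets borel" and t: "0 \<le> t"
    and mass: "measure \<mu> {z. \<bar>z - y\<bar> \<le> t} = q"
  shows "W1 \<mu> (scale_measure (ennreal q) (return borel y))
           = ennreal (\<integral>z. \<bar>z - y\<bar> * indicator {z. \<bar>z - y\<bar> \<le> t} z \<partial>\<mu>)"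
proof (rule antisym)
  interpret prob_space \<mu>
    by (rule \<mu>(1))
  let ?B = "{z. \<bar>z - y\<bar> \<le> t}"
  have B: "?B \<in> sets borel"
    by measurable
  have "(\<lambda>z. \<bar>z - y\<bar> * indicator ?B z) \<in> borel_measurable \<mu>"
    using B by (simp add: measurable_cong_sets[OF \<mu>(2) refl])
  then have "integrable \<mu> (\<lambda>z. \<bar>z - y\<bar> * indicator ?B z)"
    using t by (intro integrable_const_bound[where B=t]) (auto simp: indicator_def)
  then have "(\<integral>\<^sup>+z. ennreal (\<bar>z - y\<bar> * indicator ?B z) \<partial>\<mu>) = ennreal (\<integral>z. \<bar>z - y\<bar> * indicator ?B z \<partial>\<mu>)"
    by (intro nn_integral_eq_integral) auto
  then show "W1 \<mu> (scale_measure (ennreal q) (return borel y)) \<le> ennreal (\<integral>z. \<bar>z - y\<bar> * indicator ?B z \<partial>\<mu>)"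
    using W1_point_mass_le[OF \<mu>(2) B, of q y] mass \<mu>(2) B by (simp add: emeasure_eq_measure)
qed (rule W1_point_mass_ge[OF assms])

section \<open>Balls of prescribed mass\<close>

lemma continuous_on_measure_dist_le:
  fixes \<mu> :: "real measure"
  assumes \<mu>: "prob_space \<mu>" "sets \<mu> = sets borel" and atomless: "\<And>a. measure \<mu> {a} = 0"
  shows "continuous_on T (\<lambda>t. measure \<mu> {z. \<bar>z - y\<bar> \<le> t})"
proof -
  interpret prob_space \<mu>
    by (rule \<mu>(1))
  define \<nu> where "\<nu> = distr \<mu> borel (\<lambda>z. \<bar>z - y\<bar>)"
  have D: "(\<lambda>z. \<bar>z - y\<bar>) \<in> measurable \<mu> borel"
    by (simp add: measurable_cong_sets[OF \<mu>(2) refl])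
  interpret \<nu>: real_distribution \<nu>
    unfolding \<nu>_def using D by (simp add: real_distribution_def real_distribution_axioms_def prob_space_distr)
  have space: "space \<mu> = UNIV"
    using sets_eq_imp_space_eq[OF \<mu>(2)] by simp
  have "measure \<nu> {t} = 0" for t
  proof -
    have "measure \<nu> {t} = measure \<mu> {z. \<bar>z - y\<bar> = t}"
      unfolding \<nu>_def using D space by (simp add: measure_distr vimage_def)
    also have "\<dots> \<le> measure \<mu> ({y - t} \<union> {y + t})"
      using \<mu>(2) by (intro finite_measure_mono) auto
    also have "\<dots> \<le> measure \<mu> {y - t} + measure \<mu> {y + t}"
      using \<mu>(2) by (intro measure_Un_le) auto
    finally show ?thesis
      using atomless measure_nonneg[of \<nu> "{t}"] by simp
  qed
  moreover have "cdf \<nu> = (\<lambda>t. measure \<mu> {z. \<bar>z - y\<bar> \<le> t})"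
    unfolding cdf_def \<nu>_def using D space by (simp add: measure_distr vimage_def)
  ultimately show ?thesis
    by (metis \<nu>.isCont_cdf continuous_at_imp_continuous_on)
qed

lemma exists_radius_of_mass:
  fixes \<mu> :: "real measure"
  assumes \<mu>: "prob_space \<mu>" "sets \<mu> = sets borel" and atomless: "\<And>a. measure \<mu> {a} = 0"
    and bound: "AE z in \<mu>. \<bar>z - y\<bar> \<le> C" and q: "0 \<le> q" "q \<le> 1"
  obtains t where "0 \<le> t" "t \<le> C" "measure \<mu> {z. \<bar>z - y\<bar> \<le> t} = q"
proof -
  interpret prob_space \<mu>
    by (rule \<mu>(1))
  let ?F = "\<lambda>t. measure \<mu> {z. \<bar>z - y\<bar> \<le> t}"
  have space: "space \<mu> = UNIV"
    using sets_eq_imp_space_eq[OF \<mu>(2)] by simp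
  have "?F 0 \<le> q"
    using atomless[of y] q by (simp add: abs_le_zero_iff)
  moreover have "{z \<in> space \<mu>. \<bar>z - y\<bar> \<le> C} \<in> events"
    unfolding space \<mu>(2) by measurable
  then have "?F C = 1"
    using prob_Collect_eq_1 bound space by simp
  moreover have "0 \<le> C"
  proof (rule ccontr)
    assume "\<not> 0 \<le> C"
    then have "{z. \<bar>z - y\<bar> \<le> C} = {}"
      by auto
    with \<open>?F C = 1\<close> show False
      by simp
  qed
  ultimately obtain t where "0 \<le> t" "t \<le> C" "?F t = q"
    using IVT'[of ?F 0 q C] q continuous_on_measure_dist_le[OF \<mu> atomless] by auto
  then show ?thesis
    using that by simp
qed

lemma
  fixes f :: "real \<Rightarrow> real"
  assumes f: "continuous_on {0..1} f" and \<mu>: "\<mu> = density lborel (\<lambda>x. ennreal (f x * indicator {0..1} x))"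
  shows sets_density_unit_interval: "sets \<mu> = sets borel"
    and measure_density_unit_interval_singleton: "measure \<mu> {a} = 0"
    and AE_density_unit_interval: "AE z in \<mu>. z \<in> {0..1}"
proof -
  define g where "g x = ennreal (f x * indicator {0..1} x)" for x
  have "(\<lambda>x. indicator {0..1} x *\<^sub>R f x) \<in> borel_measurable borel"
    using f by (intro borel_measurable_continuous_on_indicator) auto
  then have g: "g \<in> borel_measurable lborel"
    unfolding g_def by (simp add: mult.commute measurable_cong_sets[OF sets_lborel refl])
  have \<mu>_g: "\<mu> = density lborel g"
    unfolding g_def by (rule \<mu>)
  show "sets \<mu> = sets borel"
    unfolding \<mu>_g by simp
  have "AE x in lborel. x \<in> {a} \<longrightarrow> g x = 0"
    using AE_lborel_singleton[of a] by eventually_elim simp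
  then have "{a} \<in> null_sets \<mu>"
    unfolding \<mu>_g null_sets_density_iff[OF g] by simp
  then show "measure \<mu> {a} = 0"
    by (simp add: measure_def null_setsD1)
  show "AE z in \<mu>. z \<in> {0..1}"
    unfolding \<mu>_g AE_density[OF g] by (auto simp: g_def indicator_def)
qed

theorem theorem3p3:
  fixes \<mu> :: "real measure" and f :: "real \<Rightarrow> real" and q y :: real
  assumes "prob_space \<mu>"
    and "\<And>x. f x \<ge> 0"
    and "continuous_on {0..1} f"
    and "\<mu> = density lborel (\<lambda>x. ennreal (f x * indicator {0..1} x))"
    and "0 < q" and "q < 1"
  shows "(\<lambda>n. \<integral>x. SW q n x y \<partial>(PiM {..<n} (\<lambda>_. \<mu>)))
           \<longlonglongrightarrow> q - enn2real (W1 \<mu> (scale_measure (ennreal q) (return borel y)))"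
proof -
  note sets = sets_density_unit_interval[OF assms(3,4)]
  have "AE z in \<mu>. \<bar>z - y\<bar> \<le> \<bar>y\<bar> + 1"
    using AE_density_unit_interval[OF assms(3,4)] by eventually_elim auto
  moreover obtain t where t: "0 \<le> t" "t \<le> \<bar>y\<bar> + 1" "measure \<mu> {z. \<bar>z - y\<bar> \<le> t} = q"
    using exists_radius_of_mass[OF assms(1) sets measure_density_unit_interval_singleton[OF assms(3,4)]
        calculation, of q] assms(5,6) by auto
  moreover have "0 \<le> (\<integral>z. \<bar>z - y\<bar> * indicator {z. \<bar>z - y\<bar> \<le> t} z \<partial>\<mu>)"
    by (auto intro!: integral_nonneg simp: indicator_def)
  ultimately show ?thesis
    using expected_SW_tendsto[OF assms(1) sets _ t(1,2) assms(5,6) t(3)]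
    by (simp add: W1_point_mass[OF assms(1) sets t(1,3)])
qed

end
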